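(* Let $(M,d)$ be a complete pointed metric space. Then $\delta(M)$ is a weakly closed subset of $\mathcal F(M)$.
   Context: A pointed metric space is a metric space with a distinguished point $0$. $\mathrm{Lip}_0(M)$ denotes the real-valued Lipschitz functions on $M$ vanishing at $0$, normed by the Lipschitz constant. $\delta:M\to\mathrm{Lip}_0(M)^*$, $\delta(x)(\varphi)=\varphi(x)$; the Lipschitz-free space $\mathcal F(M)$ is the norm-closed linear span of $\delta(M)$ in $\mathrm{Lip}_0(M)^*$ (its dual is isometric to $\mathrm{Lip}_0(M)$). *)

theory Defs
  imports "HOL-Analysis.Analysis"
begin

definition Lip0 :: "'a::metric_space \<Rightarrow> ('a \<Rightarrow> real) set" where
  "Lip0 p0 = {f. (\<exists>C. lipschitz_on C UNIV f) \<and> f p0 = 0}"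

definition lipnorm :: "('a::metric_space \<Rightarrow> real) \<Rightarrow> real" where
  "lipnorm f = Inf {C. lipschitz_on C UNIV f}"

text \<open>The dual Lip_0(M)^*: bounded linear functionals on Lip_0(M). They are represented
  as functions on all of 'a => real, normalised to be 0 outside Lip_0(M).\<close>
definition LipDual :: "'a::metric_space \<Rightarrow> (('a \<Rightarrow> real) \<Rightarrow> real) set" where
  "LipDual p0 = {\<Phi>.
     (\<forall>f\<in>Lip0 p0. \<forall>g\<in>Lip0 p0. \<forall>a b::real. \<Phi> (\<lambda>x. a * f x + b * g x) = a * \<Phi> f + b * \<Phi> g)
   \<and> (\<exists>K. \<forall>f\<in>Lip0 p0. \<bar>\<Phi> f\<bar> \<le> K * lipnorm f)
   \<and> (\<forall>f. f \<notin> Lip0 p0 \<longrightarrow> \<Phi> f = 0)}"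

definition dnorm :: "'a::metric_space \<Rightarrow> (('a \<Rightarrow> real) \<Rightarrow> real) \<Rightarrow> real" where
  "dnorm p0 \<Phi> = Sup {\<bar>\<Phi> f\<bar> | f. f \<in> Lip0 p0 \<and> lipnorm f \<le> 1}"

definition delta :: "'a::metric_space \<Rightarrow> 'a \<Rightarrow> (('a \<Rightarrow> real) \<Rightarrow> real)" where
  "delta p0 x = (\<lambda>f. if f \<in> Lip0 p0 then f x else 0)"

definition delta_span :: "'a::metric_space \<Rightarrow> (('a \<Rightarrow> real) \<Rightarrow> real) set" where
  "delta_span p0 = {(\<lambda>f. \<Sum>i<n. c i * delta p0 (p i) f) | (n::nat) (c::nat \<Rightarrow> real) (p::nat \<Rightarrow> 'a). True}"

definition Free :: "'a::metric_space \<Rightarrow> (('a \<Rightarrow> real) \<Rightarrow> real) set" where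
  "Free p0 = {\<mu> \<in> LipDual p0. \<forall>e>0. \<exists>\<nu>\<in>delta_span p0. dnorm p0 (\<lambda>f. \<mu> f - \<nu> f) < e}"

definition FreeDual :: "'a::metric_space \<Rightarrow> ((('a \<Rightarrow> real) \<Rightarrow> real) \<Rightarrow> real) set" where
  "FreeDual p0 = {L.
     (\<forall>\<mu>\<in>Free p0. \<forall>\<nu>\<in>Free p0. \<forall>a b::real.
        L (\<lambda>f. a * \<mu> f + b * \<nu> f) = a * L \<mu> + b * L \<nu>)
   \<and> (\<exists>K. \<forall>\<mu>\<in>Free p0. \<bar>L \<mu>\<bar> \<le> K * dnorm p0 \<mu>)}"

definition weak_Free :: "'a::metric_space \<Rightarrow> (('a \<Rightarrow> real) \<Rightarrow> real) topology" where
  "weak_Free p0 = topology_generated_by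
     {Free p0 \<inter> {\<mu>. L \<mu> \<in> U} | L U. L \<in> FreeDual p0 \<and> open U}"

end

theory Submission
  imports Defs
begin

text \<open>Let \<open>\<mu>\<close> be weak*-adherent to \<open>\<delta>(M)\<close>. Testing \<open>\<mu>\<close> on the 1-Lipschitz functions
  \<open>x \<mapsto> d(x,y) - d(p\<^sub>0,y)\<close> yields a function \<open>D(y)\<close> which behaves like the distance from a
  virtual point: it is 1-Lipschitz and \<open>d(y,z) \<le> D(y) + D(z)\<close>. If \<open>inf D = 0\<close>, a minimising
  sequence is Cauchy, its limit \<open>y\<close> (by completeness) has \<open>D(y) = 0\<close>, and then \<open>\<mu> = \<delta>(y)\<close>.
  If \<open>D \<ge> r > 0\<close>, approximate \<open>\<mu>\<close> in norm by a finitely supported \<open>\<nu>\<close>; the function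
  \<open>min(r/2, d(\<cdot>, supp \<nu>))\<close> is annihilated by \<open>\<nu>\<close>, so \<open>\<mu>\<close> is small on it, yet it equals \<open>r/2\<close>
  at every point that weak*-approximates \<open>\<mu>\<close>.\<close>

lemma complete_distance_function_has_zero:
  fixes D :: "'a::complete_space \<Rightarrow> real"
  assumes nonneg: "\<And>y. 0 \<le> D y"
    and lip: "\<And>y z. D z \<le> D y + dist y z"
    and dist_le: "\<And>y z. dist y z \<le> D y + D z"
    and inf_zero: "\<And>r. r > 0 \<Longrightarrow> \<exists>y. D y < r"
  obtains y where "D y = 0"
proof -
  have "\<forall>n. \<exists>y. D y < inverse (real (Suc n))" using inf_zero by simp
  then obtain Y where Y: "\<And>n. D (Y n) < inverse (real (Suc n))" by metis
  have DY: "(\<lambda>n. D (Y n)) \<longlonglongrightarrow> 0"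
    by (rule tendsto_sandwich[OF _ _ tendsto_const LIMSEQ_inverse_real_of_nat])
      (use nonneg Y less_imp_le in \<open>auto intro!: always_eventually\<close>)
  have "Cauchy Y"
  proof (rule metric_CauchyI)
    fix e :: real assume "e > 0"
    then obtain M where M: "\<And>n. n \<ge> M \<Longrightarrow> \<bar>D (Y n)\<bar> < e/2"
      using DY unfolding LIMSEQ_def dist_real_def by (metis diff_zero half_gt_zero)
    have "dist (Y m) (Y n) < e" if "m \<ge> M" "n \<ge> M" for m n
      using dist_le[of "Y m" "Y n"] M[OF that(1)] M[OF that(2)] by linarith
    then show "\<exists>M. \<forall>m\<ge>M. \<forall>n\<ge>M. dist (Y m) (Y n) < e" by blast
  qed
  then obtain y where lim: "Y \<longlonglongrightarrow> y" using Cauchy_convergent convergent_def by blast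
  have "lipschitz_on 1 UNIV D"
  proof (rule lipschitz_onI)
    fix y z
    show "dist (D y) (D z) \<le> 1 * dist y z"
      using lip[of y z] lip[of z y] by (simp add: dist_real_def dist_commute abs_le_iff)
  qed simp
  then have "isCont D y"
    using lipschitz_on_continuous_on continuous_on_eq_continuous_at by blast
  then have "(\<lambda>n. D (Y n)) \<longlonglongrightarrow> D y" using lim isCont_tendsto_compose by blast
  with DY have "D y = 0" using LIMSEQ_unique by blast
  then show ?thesis by (rule that)
qed

lemma lipschitz_on_lipnorm:
  assumes "\<exists>C. lipschitz_on C UNIV (f::'a::metric_space \<Rightarrow> real)"
  shows "lipschitz_on (lipnorm f) UNIV f"
proof -
  let ?S = "{C. lipschitz_on C UNIV f}"
  have ne: "?S \<noteq> {}" using assms by auto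
  have nonneg: "0 \<le> lipnorm f" unfolding lipnorm_def
    by (rule cInf_greatest[OF ne]) (auto dest: lipschitz_on_nonneg)
  show ?thesis
  proof (rule lipschitz_onI[OF _ nonneg])
    fix x y :: 'a
    show "dist (f x) (f y) \<le> lipnorm f * dist x y"
    proof (cases "x = y")
      case False
      then have pos: "dist x y > 0" by simp
      have "dist (f x) (f y) / dist x y \<le> lipnorm f" unfolding lipnorm_def
      proof (rule cInf_greatest[OF ne])
        fix C assume "C \<in> ?S"
        then have "dist (f x) (f y) \<le> C * dist x y" by (auto dest: lipschitz_onD)
        then show "dist (f x) (f y) / dist x y \<le> C" using pos by (simp add: divide_le_eq)
      qed
      then show ?thesis using pos by (simp add: divide_le_eq)
    qed simp
  qed
qed

lemma lipnorm_le: "lipschitz_on C UNIV f \<Longrightarrow> lipnorm f \<le> C"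
  unfolding lipnorm_def
  by (rule cInf_lower) (auto intro!: bdd_belowI[of _ 0] dest: lipschitz_on_nonneg)

lemma Lip0_lipschitz_on: "f \<in> Lip0 p0 \<Longrightarrow> lipschitz_on (lipnorm f) UNIV f"
  unfolding Lip0_def by (auto intro: lipschitz_on_lipnorm)

lemma Lip0_lipnorm_nonneg: "f \<in> Lip0 p0 \<Longrightarrow> 0 \<le> lipnorm f"
  using Lip0_lipschitz_on lipschitz_on_nonneg by blast

lemma Lip0_abs_le: "f \<in> Lip0 p0 \<Longrightarrow> \<bar>f x\<bar> \<le> lipnorm f * dist x p0"
  using lipschitz_onD[OF Lip0_lipschitz_on, of f p0 x p0]
  by (simp add: Lip0_def dist_real_def)

lemma Lip0_linear_combination:
  assumes "f \<in> Lip0 p0" "g \<in> Lip0 p0"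
  shows "(\<lambda>x. a * f x + b * g x) \<in> Lip0 p0"
proof -
  obtain C D where "lipschitz_on C UNIV f" "lipschitz_on D UNIV g" "f p0 = 0" "g p0 = 0"
    using assms unfolding Lip0_def by blast
  then have "lipschitz_on (\<bar>a\<bar> * C + \<bar>b\<bar> * D) UNIV (\<lambda>x. a * f x + b * g x)"
    by (intro lipschitz_on_add lipschitz_on_cmult_real)
  then show ?thesis using \<open>f p0 = 0\<close> \<open>g p0 = 0\<close> unfolding Lip0_def by auto
qed

lemma min_infdist_Lip0:
  assumes "p0 \<in> P" "0 \<le> s"
  shows "(\<lambda>x. min s (infdist x P)) \<in> Lip0 p0" "lipnorm (\<lambda>x. min s (infdist x P)) \<le> 1"
proof -
  have lip: "lipschitz_on 1 UNIV (\<lambda>x. min s (infdist x P))"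
  proof (rule lipschitz_onI)
    fix x y
    have "\<bar>infdist x P - infdist y P\<bar> \<le> dist x y" by (rule infdist_triangle_abs)
    then show "dist (min s (infdist x P)) (min s (infdist y P)) \<le> 1 * dist x y"
      unfolding dist_real_def min_def by auto
  qed simp
  moreover have "min s (infdist p0 P) = 0" using assms by simp
  ultimately show "(\<lambda>x. min s (infdist x P)) \<in> Lip0 p0" unfolding Lip0_def by blast
  show "lipnorm (\<lambda>x. min s (infdist x P)) \<le> 1" using lipnorm_le[OF lip] .
qed

lemma abs_le_dnorm:
  assumes bounded: "\<exists>K. \<forall>g\<in>Lip0 p0. \<bar>\<Phi> g\<bar> \<le> K * lipnorm g"
    and f: "f \<in> Lip0 p0" "lipnorm f \<le> 1"
  shows "\<bar>\<Phi> f\<bar> \<le> dnorm p0 \<Phi>"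
proof -
  obtain K where K: "\<forall>g\<in>Lip0 p0. \<bar>\<Phi> g\<bar> \<le> K * lipnorm g" using bounded by blast
  have "bdd_above {\<bar>\<Phi> g\<bar> | g. g \<in> Lip0 p0 \<and> lipnorm g \<le> 1}"
  proof (rule bdd_aboveI[of _ "max K 0"])
    fix y assume "y \<in> {\<bar>\<Phi> g\<bar> | g. g \<in> Lip0 p0 \<and> lipnorm g \<le> 1}"
    then obtain g where g: "g \<in> Lip0 p0" "lipnorm g \<le> 1" "y = \<bar>\<Phi> g\<bar>" by blast
    have "K * lipnorm g \<le> max K 0 * lipnorm g"
      using Lip0_lipnorm_nonneg[OF g(1)] by (intro mult_right_mono) auto
    also have "\<dots> \<le> max K 0"
      using g(2) Lip0_lipnorm_nonneg[OF g(1)] by (metis max.cobounded2 mult.right_neutral mult_left_mono)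
    finally show "y \<le> max K 0" using K g by force
  qed
  then show ?thesis unfolding dnorm_def by (intro cSup_upper) (use f in auto)
qed

lemma LipDual_abs_le:
  assumes \<mu>: "\<mu> \<in> LipDual p0" and f: "f \<in> Lip0 p0"
  shows "\<bar>\<mu> f\<bar> \<le> lipnorm f * dnorm p0 \<mu>"
proof -
  have linear: "\<mu> (\<lambda>x. a * f x + b * f x) = a * \<mu> f + b * \<mu> f" for a b
    using \<mu> f unfolding LipDual_def by blast
  have scale: "\<mu> (\<lambda>x. a * f x + 0 * f x) = a * \<mu> f" for a
    using linear[of a 0] by simp
  have bounded: "\<exists>K. \<forall>g\<in>Lip0 p0. \<bar>\<mu> g\<bar> \<le> K * lipnorm g" using \<mu> unfolding LipDual_def by blast
  let ?c = "lipnorm f"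
  show ?thesis
  proof (cases "?c = 0")
    case True
    have "f x = 0" for x
      using lipschitz_onD[OF Lip0_lipschitz_on[OF f], of x p0] True f by (simp add: Lip0_def)
    then have "(\<lambda>x. 0 * f x + 0 * f x) = f" by auto
    then show ?thesis using scale[of 0] True by simp
  next
    case False
    then have pos: "?c > 0" using Lip0_lipnorm_nonneg[OF f] by simp
    let ?g = "\<lambda>x. (1/?c) * f x + 0 * f x"
    have "lipschitz_on 1 UNIV ?g"
    proof (rule lipschitz_onI)
      fix x y
      have "dist (f x) (f y) \<le> ?c * dist x y" by (rule lipschitz_onD[OF Lip0_lipschitz_on[OF f]]) auto
      moreover have "?g x - ?g y = (f x - f y) / ?c" by (simp add: diff_divide_distrib)
      ultimately show "dist (?g x) (?g y) \<le> 1 * dist x y" using pos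
        by (simp add: dist_real_def divide_le_eq mult.commute)
    qed simp
    then have "\<bar>\<mu> ?g\<bar> \<le> dnorm p0 \<mu>"
      by (intro abs_le_dnorm[OF bounded] Lip0_linear_combination[OF f f] lipnorm_le)
    then have "\<bar>\<mu> f\<bar> / ?c \<le> dnorm p0 \<mu>" using scale[of "1/?c"] pos by (simp add: abs_mult)
    then show ?thesis using pos by (simp add: divide_le_eq mult.commute)
  qed
qed

lemma delta_LipDual: "delta p0 x \<in> LipDual p0"
  unfolding LipDual_def
proof (intro CollectI conjI ballI allI impI)
  show "\<exists>K. \<forall>f\<in>Lip0 p0. \<bar>delta p0 x f\<bar> \<le> K * lipnorm f"
    by (rule exI[of _ "dist x p0"]) (auto simp: delta_def mult.commute intro: Lip0_abs_le)
qed (auto simp: delta_def Lip0_linear_combination)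

lemma dnorm_zero: "dnorm p0 (\<lambda>f. 0) = 0"
proof -
  have "lipschitz_on 0 UNIV (\<lambda>x::'a. 0::real)" by (rule lipschitz_onI) auto
  then have "(\<lambda>x. 0) \<in> Lip0 p0" "lipnorm (\<lambda>x::'a. 0::real) \<le> 1"
    using lipnorm_le unfolding Lip0_def by fastforce+
  then have "{\<bar>(\<lambda>f. 0::real) f\<bar> | f. f \<in> Lip0 p0 \<and> lipnorm f \<le> 1} = {0}" by auto
  then show ?thesis unfolding dnorm_def by simp
qed

lemma delta_Free: "delta p0 x \<in> Free p0"
  unfolding Free_def
proof (intro CollectI conjI allI impI delta_LipDual)
  fix e :: real assume "e > 0"
  have "delta p0 x = (\<lambda>f. \<Sum>i<(1::nat). (\<lambda>_. 1) i * delta p0 ((\<lambda>_. x) i) f)"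
    by (simp add: lessThan_Suc)
  then have "delta p0 x \<in> delta_span p0" unfolding delta_span_def
    by (intro CollectI exI[of _ "1::nat"] exI[of _ "\<lambda>_. 1"] exI[of _ "\<lambda>_. x"]) simp
  then show "\<exists>\<nu>\<in>delta_span p0. dnorm p0 (\<lambda>f. delta p0 x f - \<nu> f) < e"
    using dnorm_zero[of p0] \<open>e > 0\<close> by force
qed

lemma delta_span_bounded:
  assumes "\<nu> \<in> delta_span p0"
  shows "\<exists>K. \<forall>f\<in>Lip0 p0. \<bar>\<nu> f\<bar> \<le> K * lipnorm f"
proof -
  obtain n :: nat and c p where \<nu>: "\<nu> = (\<lambda>f. \<Sum>i<n. c i * delta p0 (p i) f)"
    using assms unfolding delta_span_def by fastforce
  show ?thesis
  proof (intro exI ballI)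
    fix f assume f: "f \<in> Lip0 p0"
    have "\<bar>\<nu> f\<bar> \<le> (\<Sum>i<n. \<bar>c i\<bar> * \<bar>f (p i)\<bar>)"
      unfolding \<nu> using f by (simp add: delta_def sum_abs flip: abs_mult)
    also have "\<dots> \<le> (\<Sum>i<n. \<bar>c i\<bar> * (lipnorm f * dist (p i) p0))"
      by (intro sum_mono mult_left_mono Lip0_abs_le[OF f]) auto
    also have "\<dots> = (\<Sum>i<n. \<bar>c i\<bar> * dist (p i) p0) * lipnorm f"
      by (simp add: sum_distrib_left sum_distrib_right ac_simps)
    finally show "\<bar>\<nu> f\<bar> \<le> (\<Sum>i<n. \<bar>c i\<bar> * dist (p i) p0) * lipnorm f" .
  qed
qed

lemma abs_le_dnorm_diff:
  assumes "\<mu> \<in> LipDual p0" "\<nu> \<in> delta_span p0" "f \<in> Lip0 p0" "lipnorm f \<le> 1"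
  shows "\<bar>\<mu> f - \<nu> f\<bar> \<le> dnorm p0 (\<lambda>g. \<mu> g - \<nu> g)"
proof (rule abs_le_dnorm[where \<Phi> = "\<lambda>g. \<mu> g - \<nu> g", OF _ assms(3,4)])
  obtain K1 where K1: "\<forall>g\<in>Lip0 p0. \<bar>\<mu> g\<bar> \<le> K1 * lipnorm g"
    using assms(1) unfolding LipDual_def by blast
  obtain K2 where K2: "\<forall>g\<in>Lip0 p0. \<bar>\<nu> g\<bar> \<le> K2 * lipnorm g"
    using delta_span_bounded[OF assms(2)] by blast
  have "\<bar>\<mu> g - \<nu> g\<bar> \<le> (K1 + K2) * lipnorm g" if "g \<in> Lip0 p0" for g
    using K1 K2 that by (fastforce simp: distrib_right)
  then show "\<exists>K. \<forall>g\<in>Lip0 p0. \<bar>\<mu> g - \<nu> g\<bar> \<le> K * lipnorm g" by blast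
qed

lemma eval_FreeDual: "f \<in> Lip0 p0 \<Longrightarrow> (\<lambda>\<mu>. \<mu> f) \<in> FreeDual p0"
  unfolding FreeDual_def
  by (auto intro!: exI[of _ "lipnorm f"] LipDual_abs_le simp: Free_def)

lemma topspace_weak_Free: "topspace (weak_Free p0) = Free p0"
proof -
  have "(\<lambda>\<mu>. 0) \<in> FreeDual p0" unfolding FreeDual_def by (auto intro!: exI[of _ 0])
  then have "Free p0 \<in> {Free p0 \<inter> {\<mu>. L \<mu> \<in> U} | L U. L \<in> FreeDual p0 \<and> open U}"
    by (auto intro!: exI[of _ "\<lambda>\<mu>. 0"] exI[of _ UNIV])
  then show ?thesis unfolding weak_Free_def topology_generated_by_topspace by blast
qed

lemma openin_weak_Free_eval_ball:
  assumes "finite F" "F \<subseteq> Lip0 p0"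
  shows "openin (weak_Free p0) {\<nu> \<in> Free p0. \<forall>f\<in>F. \<bar>\<nu> f - \<mu> f\<bar> < \<eta>}"
proof -
  have eq: "{\<nu> \<in> Free p0. \<forall>f\<in>F. \<bar>\<nu> f - \<mu> f\<bar> < \<eta>}
      = Free p0 \<inter> \<Inter> ((\<lambda>f. Free p0 \<inter> {\<nu>. \<nu> f \<in> ball (\<mu> f) \<eta>}) ` F)"
    by (auto simp: dist_real_def abs_minus_commute)
  have "openin (weak_Free p0) (Free p0 \<inter> {\<nu>. \<nu> f \<in> ball (\<mu> f) \<eta>})" if "f \<in> F" for f
  proof -
    have "(\<lambda>\<nu>. \<nu> f) \<in> FreeDual p0" using that assms(2) eval_FreeDual by blast
    then have "Free p0 \<inter> {\<nu>. \<nu> f \<in> ball (\<mu> f) \<eta>}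
        \<in> {Free p0 \<inter> {\<mu>. L \<mu> \<in> U} | L U. L \<in> FreeDual p0 \<and> open U}"
      by (intro CollectI exI[of _ "\<lambda>\<nu>. \<nu> f"] exI[of _ "ball (\<mu> f) \<eta>"]) simp
    then show ?thesis unfolding weak_Free_def by (rule topology_generated_by_Basis)
  qed
  moreover have "openin (weak_Free p0) (Free p0)"
    using openin_topspace[of "weak_Free p0"] by (simp add: topspace_weak_Free)
  ultimately show ?thesis unfolding eq using assms(1) by (intro openin_Int_Inter) auto
qed

definition weak_star_adherent_delta :: "'a::metric_space \<Rightarrow> (('a \<Rightarrow> real) \<Rightarrow> real) \<Rightarrow> bool" where
  "weak_star_adherent_delta p0 \<mu> \<longleftrightarrow>
     (\<forall>F \<eta>. finite F \<and> F \<subseteq> Lip0 p0 \<and> \<eta> > 0 \<longrightarrow> (\<exists>x. \<forall>f\<in>F. \<bar>f x - \<mu> f\<bar> < \<eta>))"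

text \<open>For \<open>\<mu> = \<delta>(x)\<close> this is \<open>d(x,y)\<close>.\<close>
definition virtual_dist :: "'a::metric_space \<Rightarrow> (('a \<Rightarrow> real) \<Rightarrow> real) \<Rightarrow> 'a \<Rightarrow> real" where
  "virtual_dist p0 \<mu> y = \<mu> (\<lambda>x. dist x y - dist p0 y) + dist p0 y"

lemma dist_shift_Lip0: "(\<lambda>x. dist x y - dist p0 y) \<in> Lip0 p0"
proof -
  have "lipschitz_on 1 UNIV (\<lambda>x. dist x y - dist p0 y)"
    by (rule lipschitz_onI) (auto simp: dist_real_def, metric)
  then show ?thesis unfolding Lip0_def by auto
qed

lemma weak_star_adherent_delta_approx:
  assumes "weak_star_adherent_delta p0 \<mu>" "finite F" "F \<subseteq> Lip0 p0" "finite Y" "\<eta> > 0"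
  shows "\<exists>x. (\<forall>f\<in>F. \<bar>f x - \<mu> f\<bar> < \<eta>) \<and> (\<forall>y\<in>Y. \<bar>dist x y - virtual_dist p0 \<mu> y\<bar> < \<eta>)"
proof -
  let ?h = "\<lambda>y x. dist x y - dist p0 y"
  have "finite (F \<union> ?h ` Y)" "F \<union> ?h ` Y \<subseteq> Lip0 p0"
    using assms(2-4) dist_shift_Lip0 by auto
  then obtain x where x: "\<forall>f\<in>F \<union> ?h ` Y. \<bar>f x - \<mu> f\<bar> < \<eta>"
    using assms(1,5) unfolding weak_star_adherent_delta_def by blast
  have "\<bar>dist x y - virtual_dist p0 \<mu> y\<bar> < \<eta>" if "y \<in> Y" for y
  proof -
    have "?h y \<in> F \<union> ?h ` Y" using that by blast
    from bspec[OF x this] show ?thesis by (simp add: virtual_dist_def)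
  qed
  then show ?thesis using x by blast
qed

context
  fixes p0 :: "'a::metric_space" and \<mu>
  assumes adherent: "weak_star_adherent_delta p0 \<mu>"
begin

lemma virtual_dist_nonneg: "0 \<le> virtual_dist p0 \<mu> y"
proof (rule field_le_epsilon[of 0, simplified])
  fix e :: real assume "e > 0"
  then obtain x where "\<bar>dist x y - virtual_dist p0 \<mu> y\<bar> < e"
    using weak_star_adherent_delta_approx[OF adherent, of "{}" "{y}" e] by auto
  then show "0 \<le> virtual_dist p0 \<mu> y + e" using zero_le_dist[of x y] by linarith
qed

lemma virtual_dist_triangle:
  "virtual_dist p0 \<mu> z \<le> virtual_dist p0 \<mu> y + dist y z"
  "dist y z \<le> virtual_dist p0 \<mu> y + virtual_dist p0 \<mu> z"
proof -
  have approx: "\<exists>x. \<bar>dist x y - virtual_dist p0 \<mu> y\<bar> < e/2 \<and> \<bar>dist x z - virtual_dist p0 \<mu> z\<bar> < e/2"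
    if "e > 0" for e
    using weak_star_adherent_delta_approx[OF adherent, of "{}" "{y, z}" "e/2"] that by auto
  show "virtual_dist p0 \<mu> z \<le> virtual_dist p0 \<mu> y + dist y z"
  proof (rule field_le_epsilon)
    fix e :: real assume "e > 0"
    then obtain x where "\<bar>dist x y - virtual_dist p0 \<mu> y\<bar> < e/2" "\<bar>dist x z - virtual_dist p0 \<mu> z\<bar> < e/2"
      using approx by blast
    then show "virtual_dist p0 \<mu> z \<le> virtual_dist p0 \<mu> y + dist y z + e"
      using dist_triangle[of x z y] by linarith
  qed
  show "dist y z \<le> virtual_dist p0 \<mu> y + virtual_dist p0 \<mu> z"
  proof (rule field_le_epsilon)
    fix e :: real assume "e > 0"
    then obtain x where "\<bar>dist x y - virtual_dist p0 \<mu> y\<bar> < e/2" "\<bar>dist x z - virtual_dist p0 \<mu> z\<bar> < e/2"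
      using approx by blast
    then show "dist y z \<le> virtual_dist p0 \<mu> y + virtual_dist p0 \<mu> z + e"
      using dist_triangle3[of y z x] by linarith
  qed
qed

lemma virtual_dist_eq_0_imp_delta:
  assumes "\<mu> \<in> LipDual p0" "virtual_dist p0 \<mu> y = 0"
  shows "\<mu> = delta p0 y"
proof
  fix g
  show "\<mu> g = delta p0 y g"
  proof (cases "g \<in> Lip0 p0")
    case False
    then show ?thesis using assms(1) by (simp add: LipDual_def delta_def)
  next
    case True
    let ?L = "lipnorm g"
    have L0: "0 \<le> ?L" using Lip0_lipnorm_nonneg[OF True] .
    have "\<bar>\<mu> g - g y\<bar> \<le> 0 + e" if "e > 0" for e
    proof -
      define \<eta> where "\<eta> = e / (1 + ?L)"
      have "\<eta> > 0" using that L0 by (simp add: \<eta>_def)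
      then obtain x where x: "\<bar>g x - \<mu> g\<bar> < \<eta>" "dist x y < \<eta>"
        using weak_star_adherent_delta_approx[OF adherent, of "{g}" "{y}" \<eta>] True assms(2) by auto
      have "\<bar>g x - g y\<bar> \<le> ?L * dist x y"
        using lipschitz_onD[OF Lip0_lipschitz_on[OF True], of x y] by (simp add: dist_real_def)
      also have "\<dots> \<le> ?L * \<eta>" using x(2) L0 by (intro mult_left_mono) auto
      finally have "\<bar>\<mu> g - g y\<bar> < \<eta> + ?L * \<eta>" using x(1) by linarith
      also have "\<dots> = \<eta> * (1 + ?L)" by (simp add: algebra_simps)
      also have "\<dots> = e" using L0 by (simp add: \<eta>_def)
      finally show ?thesis by simp
    qed
    then have "\<bar>\<mu> g - g y\<bar> \<le> 0" by (rule field_le_epsilon)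
    then show ?thesis using True by (simp add: delta_def)
  qed
qed

lemma virtual_dist_inf_zero:
  assumes \<mu>: "\<mu> \<in> Free p0" and "r > 0"
  shows "\<exists>y. virtual_dist p0 \<mu> y < r"
proof (rule ccontr)
  assume "\<nexists>y. virtual_dist p0 \<mu> y < r"
  then have far: "r \<le> virtual_dist p0 \<mu> y" for y by (simp add: not_less)
  have "\<forall>e>0. \<exists>\<nu>\<in>delta_span p0. dnorm p0 (\<lambda>f. \<mu> f - \<nu> f) < e"
    using \<mu> unfolding Free_def by blast
  moreover have "r/2 > 0" using \<open>r > 0\<close> by simp
  ultimately obtain \<nu> where \<nu>: "\<nu> \<in> delta_span p0" "dnorm p0 (\<lambda>f. \<mu> f - \<nu> f) < r/2"
    by blast
  obtain n :: nat and c p where \<nu>_eq: "\<nu> = (\<lambda>f. \<Sum>i<n. c i * delta p0 (p i) f)"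
    using \<nu>(1) unfolding delta_span_def by fastforce
  define P where "P = insert p0 (p ` {..<n})"
  define f where "f x = min (r/2) (infdist x P)" for x
  have P: "finite P" "p0 \<in> P" "P \<noteq> {}" by (auto simp: P_def)
  have f: "f \<in> Lip0 p0" "lipnorm f \<le> 1"
    using min_infdist_Lip0[OF P(2), of "r/2"] \<open>r > 0\<close> unfolding f_def[abs_def] by auto
  have "\<nu> f = 0" using f(1) \<open>r > 0\<close> unfolding \<nu>_eq delta_def by (simp add: f_def P_def)
  then have small: "\<bar>\<mu> f\<bar> < r/2"
    using abs_le_dnorm_diff[of \<mu> p0 \<nu> f] \<mu> \<nu> f unfolding Free_def by auto
  text \<open>A point approximating \<open>\<mu>\<close> on \<open>f\<close> and on the distances to \<open>P\<close> is \<open>r/2\<close>-far from \<open>P\<close>.\<close>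
  obtain x where x: "\<bar>f x - \<mu> f\<bar> < r/2 - \<bar>\<mu> f\<bar>"
    "\<forall>a\<in>P. \<bar>dist x a - virtual_dist p0 \<mu> a\<bar> < r/2 - \<bar>\<mu> f\<bar>"
    using weak_star_adherent_delta_approx[OF adherent, of "{f}" P "r/2 - \<bar>\<mu> f\<bar>"] f P small by auto
  have "r/2 \<le> infdist x P" unfolding infdist_notempty[OF P(3)]
  proof (rule cINF_greatest[OF P(3)])
    fix a assume "a \<in> P"
    then show "r/2 \<le> dist x a" using x(2) far[of a] by force
  qed
  then have "f x = r/2" by (simp add: f_def)
  then show False using x(1) by linarith
qed

end

lemma weak_star_adherent_delta_in_range:
  fixes p0 :: "'a::complete_space"
  assumes "\<mu> \<in> Free p0" "weak_star_adherent_delta p0 \<mu>"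
  shows "\<mu> \<in> range (delta p0)"
proof -
  obtain y where "virtual_dist p0 \<mu> y = 0"
    by (rule complete_distance_function_has_zero[of "virtual_dist p0 \<mu>"])
      (use assms virtual_dist_nonneg virtual_dist_triangle virtual_dist_inf_zero in auto)
  with assms have "\<mu> = delta p0 y" by (intro virtual_dist_eq_0_imp_delta) (auto simp: Free_def)
  then show ?thesis by simp
qed

theorem proposition6p3:
  fixes p0 :: "'a::complete_space"
  shows "closedin (weak_Free p0) (delta p0 ` UNIV)"
proof -
  have "openin (weak_Free p0) (Free p0 - range (delta p0))"
  proof (subst openin_subopen, intro ballI)
    fix \<mu> assume \<mu>: "\<mu> \<in> Free p0 - range (delta p0)"
    then have "\<not> weak_star_adherent_delta p0 \<mu>" using weak_star_adherent_delta_in_range by blast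
    then obtain F \<eta> where F: "finite F" "F \<subseteq> Lip0 p0" "\<eta> > 0"
      and separated: "\<forall>x. \<not> (\<forall>f\<in>F. \<bar>f x - \<mu> f\<bar> < \<eta>)"
      unfolding weak_star_adherent_delta_def by blast
    let ?T = "{\<nu> \<in> Free p0. \<forall>f\<in>F. \<bar>\<nu> f - \<mu> f\<bar> < \<eta>}"
    have "delta p0 x \<notin> ?T" for x
    proof
      assume "delta p0 x \<in> ?T"
      then have "\<forall>f\<in>F. \<bar>f x - \<mu> f\<bar> < \<eta>" using F(2) by (auto simp: delta_def subset_iff)
      with separated show False by blast
    qed
    then have "?T \<subseteq> Free p0 - range (delta p0)" by blast
    moreover have "\<mu> \<in> ?T" using \<mu> F(3) by simp
    ultimately show "\<exists>T. openin (weak_Free p0) T \<and> \<mu> \<in> T \<and> T \<subseteq> Free p0 - range (delta p0)"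
      using openin_weak_Free_eval_ball[OF F(1,2)] by blast
  qed
  then show ?thesis unfolding closedin_def topspace_weak_Free using delta_Free by blast
qed

end
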